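(* In the differential algebra $\Gamma$, both the element $\hat{\mathcal D}=bc^{-1}-\alpha c^{-1}\delta c^{-1}$ and the superdeterminant $\mathcal D_h=ad^{-1}-\beta d^{-1}\gamma d^{-1}$ are central, i.e. commute with all of $a,\beta,\gamma,d,\alpha,b,c,\delta$.
   Context: Let $h$ be an odd (Grassmann) parameter with $h^2=0$; even elements commute with everything and odd elements anticommute with each other. $\mathcal A$ is the $\mathbb Z_2$-graded algebra generated by even invertible $a,d$ and odd $\beta,\gamma$ ($h$ commuting with $a,d$, anticommuting with $\beta,\gamma$) subject to $a\beta=\beta a$, $a\gamma=\gamma a+h a^2(1-\mathcal D_h^{-1})$, $d\beta=\beta d$, $d\gamma=\gamma d+h d^2(\mathcal D_h-1)$, $\beta^2=0$, $\gamma^2=h\gamma d(1-\mathcal D_h)$, $\beta\gamma=-\gamma\beta+h\beta d(1-\mathcal D_h)$, $ad=da+h\beta d(\mathcal D_h-1)$, with $\mathcal D_h=ad^{-1}-\beta d^{-1}\gamma d^{-1}$. The differential algebra $\Gamma$ is the $\mathbb Z_2$-graded algebra generated by $\mathcal A$ together with odd elements $\alpha=\mathsf da,\ \delta=\mathsf dd$ and even elements $b=\mathsf d\beta,\ c=\mathsf d\gamma$ ($c$ assumed invertible; $h$ anticommutes with $\alpha,\delta$), where $\mathsf d$ is an odd map with $\mathsf d^2=0$, graded Leibniz rule and $\mathsf dh=-h\mathsf d$, subject to the relations $a\alpha=\alpha a+h(\alpha\beta-ba)$, $ab=ba-hb\beta$, $ac=ca+h(\alpha a-c\beta+\delta a)$,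 $a\delta=\delta a+h(ba+\delta\beta)$; $\beta\alpha=-\alpha\beta+hb\beta$, $\beta b=b\beta$, $\beta c=c\beta+h(\alpha+\delta)\beta$, $\beta\delta=-\delta\beta-hb\beta$; $\gamma\alpha=-\alpha\gamma+h(\alpha a+\alpha d+b\gamma)$, $\gamma b=b\gamma+hb(a+d)$, $\gamma c=c\gamma+h(\alpha\gamma+ca+cd+\delta\gamma)$, $\gamma\delta=-\delta\gamma+h(\delta a+\delta d-b\gamma)$; $d\alpha=\alpha d-h(\alpha\beta+bd)$, $db=bd+hb\beta$, $dc=cd+h(\alpha d+c\beta+\delta d)$, $d\delta=\delta d+h(bd-\delta\beta)$; and $\alpha b=b\alpha+hb^2$, $\alpha c=c\alpha+h(cb+\delta\alpha)$, $\delta b=b\delta-hb^2$, $\delta c=c\delta-h(cb-\alpha\delta)$, $\alpha^2=h\alpha b$, $\alpha\delta=-\delta\alpha+h(\delta-\alpha)b$, $\delta^2=-h\delta b$, $bc=cb+h(\delta+\alpha)b$. *)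

theory Defs
  imports Main "HOL.Real_Vector_Spaces"
begin

definition sdet :: "'r::ring_1 \<Rightarrow> 'r \<Rightarrow> 'r \<Rightarrow> 'r \<Rightarrow> 'r" where
  "sdet a be ga di = a * di - be * di * ga * di"

definition sdet_hat :: "'r::ring_1 \<Rightarrow> 'r \<Rightarrow> 'r \<Rightarrow> 'r \<Rightarrow> 'r" where
  "sdet_hat b al de ci = b * ci - al * ci * de * ci"

text \<open>Defining relations of the differential algebra Gamma (including those of the algebra A),
  realised inside an arbitrary associative unital real algebra.  Variables:
  h (odd parameter), a, d (even), be = beta, ga = gamma (odd), al = alpha, de = delta (odd),
  b, c (even); ai, di, ci are the two-sided inverses of a, d, c and Dhi the inverse of D_h.\<close>
definition Gamma_rels ::
  "'r::real_algebra_1 \<Rightarrow> 'r \<Rightarrow> 'r \<Rightarrow> 'r \<Rightarrow> 'r \<Rightarrow> 'r \<Rightarrow> 'r \<Rightarrow> 'r \<Rightarrow> 'r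
   \<Rightarrow> 'r \<Rightarrow> 'r \<Rightarrow> 'r \<Rightarrow> 'r \<Rightarrow> bool" where
  "Gamma_rels h a d be ga al b c de ai di ci Dhi \<longleftrightarrow>
    (let Dh = sdet a be ga di in
    \<comment> \<open>inverses\<close>
    a * ai = 1 \<and> ai * a = 1 \<and> d * di = 1 \<and> di * d = 1 \<and> c * ci = 1 \<and> ci * c = 1 \<and>
    Dh * Dhi = 1 \<and> Dhi * Dh = 1 \<and>
    \<comment> \<open>Grassmann parameter h\<close>
    h * h = 0 \<and>
    h * a = a * h \<and> h * d = d * h \<and> h * b = b * h \<and> h * c = c * h \<and>
    h * be = - (be * h) \<and> h * ga = - (ga * h) \<and> h * al = - (al * h) \<and> h * de = - (de * h) \<and>
    \<comment> \<open>relations of A\<close>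
    a * be = be * a \<and>
    a * ga = ga * a + h * a * a * (1 - Dhi) \<and>
    d * be = be * d \<and>
    d * ga = ga * d + h * d * d * (Dh - 1) \<and>
    be * be = 0 \<and>
    ga * ga = h * ga * d * (1 - Dh) \<and>
    be * ga = - (ga * be) + h * be * d * (1 - Dh) \<and>
    a * d = d * a + h * be * d * (Dh - 1) \<and>
    \<comment> \<open>relations of Gamma: a with differentials\<close>
    a * al = al * a + h * (al * be - b * a) \<and>
    a * b = b * a - h * b * be \<and>
    a * c = c * a + h * (al * a - c * be + de * a) \<and>
    a * de = de * a + h * (b * a + de * be) \<and>
    \<comment> \<open>beta with differentials\<close>
    be * al = - (al * be) + h * b * be \<and>
    be * b = b * be \<and>
    be * c = c * be + h * (al + de) * be \<and>
    be * de = - (de * be) - h * b * be \<and>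
    \<comment> \<open>gamma with differentials\<close>
    ga * al = - (al * ga) + h * (al * a + al * d + b * ga) \<and>
    ga * b = b * ga + h * b * (a + d) \<and>
    ga * c = c * ga + h * (al * ga + c * a + c * d + de * ga) \<and>
    ga * de = - (de * ga) + h * (de * a + de * d - b * ga) \<and>
    \<comment> \<open>d with differentials\<close>
    d * al = al * d - h * (al * be + b * d) \<and>
    d * b = b * d + h * b * be \<and>
    d * c = c * d + h * (al * d + c * be + de * d) \<and>
    d * de = de * d + h * (b * d - de * be) \<and>
    \<comment> \<open>differentials among themselves\<close>
    al * b = b * al + h * b * b \<and>
    al * c = c * al + h * (c * b + de * al) \<and>
    de * b = b * de - h * b * b \<and>
    de * c = c * de - h * (c * b - al * de) \<and>
    al * al = h * al * b \<and>
    al * de = - (de * al) + h * (de - al) * b \<and>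
    de * de = - (h * de * b) \<and>
    b * c = c * b + h * (de + al) * b)"

end

theory Submission
  imports Defs
begin

(* Every defining relation has the form x y = +-y x + h w (or x^2 = h w for odd x), where
   h^2 = 0 and h supercommutes with the generators.  Oriented as rewrite rules, together with
   the rules for d^-1 and c^-1 that they imply, these relations put every word into the normal
   order c < c^-1 < b < delta < alpha < gamma < beta < d < d^-1 < a, and both superdeterminants
   commute with a generator x because D x and x D have the same normal form.  The normal
   ordering is done in two passes: first the corrections h w are treated as opaque, then they
   are normal ordered themselves, where only w modulo h matters since h (h w) = 0.
   The inverse D_h^-1 enters only through the relation for a gamma.  Modulo h the element
   a d + beta gamma is a^2 D_h^-1, so h a^2 D_h^-1 = h (a d + beta gamma), which removes D_h^-1. *)

lemma inverse_commute_left: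
  fixes x xi y e :: "'a::ring_1"
  assumes "x * xi = 1" "xi * x = 1" "x * y = y * x + e"
  shows "xi * y = y * xi - xi * e * xi"
proof -
  have "xi * y = xi * (y * x) * xi"
    using assms(1) by (simp add: mult.assoc)
  also have "\<dots> = xi * (x * y - e) * xi"
    using assms(3) by simp
  also have "\<dots> = y * xi - xi * e * xi"
    using assms(2) by (simp add: algebra_simps flip: mult.assoc)
  finally show ?thesis .
qed

lemma inverse_commute_right:
  fixes x xi y e :: "'a::ring_1"
  assumes "x * xi = 1" "xi * x = 1" "y * x = x * y + e"
  shows "y * xi = xi * y - xi * e * xi"
proof -
  have "y * xi = xi * (x * y) * xi"
    using assms(2) by (simp flip: mult.assoc)
  also have "\<dots> = xi * (y * x - e) * xi"
    using assms(3) by simp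
  also have "\<dots> = xi * y - xi * e * xi"
    using assms(1) by (simp add: algebra_simps)
  finally show ?thesis .
qed

lemma commute_inverse:
  fixes x xi y :: "'a::ring_1"
  assumes "x * xi = 1" "xi * x = 1" "x * y = y * x"
  shows "xi * y = y * xi"
  using inverse_commute_left[of x xi y 0] assms by simp

lemma mult_eq_extend_right: "x * y = w \<Longrightarrow> x * (y * z) = w * (z::'a::semigroup_mult)"
  by (simp flip: mult.assoc)

locale Gamma_algebra =
  fixes h a d be ga al b c de ai di ci Dhi :: "'r::real_algebra_1"
  assumes rels: "Gamma_rels h a d be ga al b c de ai di ci Dhi"
begin

lemma inverse_rels:
  shows d_di: "d * di = 1" and di_d: "di * d = 1"
    and c_ci: "c * ci = 1" and ci_c: "ci * c = 1"
    and sdet_Dhi: "sdet a be ga di * Dhi = 1"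
  using rels unfolding Gamma_rels_def Let_def by auto

lemma h_rels:
  shows h_h: "h * h = 0"
    and a_h: "a * h = h * a" and d_h: "d * h = h * d"
    and b_h: "b * h = h * b" and c_h: "c * h = h * c"
    and be_h: "be * h = - (h * be)" and ga_h: "ga * h = - (h * ga)"
    and al_h: "al * h = - (h * al)" and de_h: "de * h = - (h * de)"
  using rels unfolding Gamma_rels_def Let_def by auto

lemma a_ga_Dhi: "a * ga = ga * a + h * a * a * (1 - Dhi)"
  using rels unfolding Gamma_rels_def Let_def by auto

lemma commutation_rels:
  shows a_be: "a * be = be * a"
    and d_be: "d * be = be * d"
    and d_ga: "d * ga = ga * d + h * d * d * (sdet a be ga di - 1)"
    and be_be: "be * be = 0"
    and ga_ga: "ga * ga = h * ga * d * (1 - sdet a be ga di)"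
    and be_ga: "be * ga = - (ga * be) + h * be * d * (1 - sdet a be ga di)"
    and a_d: "a * d = d * a + h * be * d * (sdet a be ga di - 1)"
    and a_al: "a * al = al * a + h * (al * be - b * a)"
    and a_b: "a * b = b * a - h * b * be"
    and a_c: "a * c = c * a + h * (al * a - c * be + de * a)"
    and a_de: "a * de = de * a + h * (b * a + de * be)"
    and be_al: "be * al = - (al * be) + h * b * be"
    and be_b: "be * b = b * be"
    and be_c: "be * c = c * be + h * (al + de) * be"
    and be_de: "be * de = - (de * be) - h * b * be"
    and ga_al: "ga * al = - (al * ga) + h * (al * a + al * d + b * ga)"
    and ga_b: "ga * b = b * ga + h * b * (a + d)"
    and ga_c: "ga * c = c * ga + h * (al * ga + c * a + c * d + de * ga)"
    and ga_de: "ga * de = - (de * ga) + h * (de * a + de * d - b * ga)"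
    and d_al: "d * al = al * d - h * (al * be + b * d)"
    and d_b: "d * b = b * d + h * b * be"
    and d_c: "d * c = c * d + h * (al * d + c * be + de * d)"
    and d_de: "d * de = de * d + h * (b * d - de * be)"
    and al_b: "al * b = b * al + h * b * b"
    and al_c: "al * c = c * al + h * (c * b + de * al)"
    and de_b: "de * b = b * de - h * b * b"
    and de_c: "de * c = c * de - h * (c * b - al * de)"
    and al_al: "al * al = h * al * b"
    and al_de: "al * de = - (de * al) + h * (de - al) * b"
    and de_de: "de * de = - (h * de * b)"
    and b_c: "b * c = c * b + h * (de + al) * b"
  using rels unfolding Gamma_rels_def Let_def by auto

lemmas inverse_commutation_rels =
  commute_inverse[OF d_di di_d d_be]
  inverse_commute_left[OF d_di di_d d_c] inverse_commute_left[OF d_di di_d d_b]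
  inverse_commute_left[OF d_di di_d d_de] inverse_commute_left[OF d_di di_d d_ga]
  inverse_commute_left[OF d_di di_d d_al[unfolded diff_conv_add_uminus]]
  inverse_commute_right[OF d_di di_d a_d]
  inverse_commute_right[OF c_ci ci_c b_c] inverse_commute_right[OF c_ci ci_c al_c]
  inverse_commute_right[OF c_ci ci_c ga_c] inverse_commute_right[OF c_ci ci_c be_c]
  inverse_commute_right[OF c_ci ci_c d_c] inverse_commute_right[OF c_ci ci_c a_c]
  inverse_commute_right[OF c_ci ci_c de_c[unfolded diff_conv_add_uminus]]

definition hcorr :: "'r \<Rightarrow> 'r" where
  "hcorr w = h * w"

text \<open>The simplifier must not rewrite inside a correction term: normal ordering its argument
  produces new corrections, and it would not terminate.\<close>
lemma hcorr_cong [cong]: "hcorr w = hcorr w" ..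

lemma hcorr_hoist:
  shows "a * hcorr w = hcorr (a * w)" "d * hcorr w = hcorr (d * w)"
    "b * hcorr w = hcorr (b * w)" "c * hcorr w = hcorr (c * w)"
    "di * hcorr w = hcorr (di * w)" "ci * hcorr w = hcorr (ci * w)"
    "be * hcorr w = - hcorr (be * w)" "ga * hcorr w = - hcorr (ga * w)"
    "al * hcorr w = - hcorr (al * w)" "de * hcorr w = - hcorr (de * w)"
    "hcorr v * w = hcorr (v * w)" "h * hcorr w = 0"
  using h_rels commute_inverse[OF d_di di_d d_h] commute_inverse[OF c_ci ci_c c_h]
  unfolding hcorr_def by (simp_all flip: mult.assoc)

text \<open>Reassociating first makes each correction a single product h * w, so that all of it
  ends up inside hcorr.\<close>
lemmas normal_ordering_base =
  commutation_rels[unfolded mult.assoc mult_minus_left, folded hcorr_def]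
  inverse_commutation_rels[unfolded mult.assoc mult_minus_left, folded hcorr_def]
  d_di di_d c_ci ci_c

lemma h_mult_Dhi: "h * (a * a * Dhi) = h * (a * d + be * ga)"
proof -
  note a_ga_hcorr = a_ga_Dhi[unfolded mult.assoc, folded hcorr_def]
  have "hcorr (a * d + be * ga) * sdet a be ga di = hcorr (a * a)"
    by (simp add: hcorr_hoist, unfold hcorr_def,
        simp add: sdet_def algebra_simps hcorr_hoist normal_ordering_base a_ga_hcorr
          normal_ordering_base[THEN mult_eq_extend_right] a_ga_hcorr[THEN mult_eq_extend_right])
  then have "h * (a * d + be * ga) * (sdet a be ga di * Dhi) = h * (a * a) * Dhi"
    unfolding hcorr_def by (simp flip: mult.assoc)
  then show ?thesis
    by (simp add: sdet_Dhi mult.assoc)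
qed

lemma a_ga: "a * ga = ga * a + hcorr (a * a - a * d - be * ga)"
  using a_ga_Dhi h_mult_Dhi unfolding hcorr_def by (simp add: algebra_simps)

lemmas normal_ordering = normal_ordering_base a_ga

lemma sdet_central:
  assumes "x \<in> {a, be, ga, d, al, b, c, de}"
  shows "sdet a be ga di * x = x * sdet a be ga di"
  using assms
  by (elim insertE emptyE;
      simp add: sdet_def algebra_simps hcorr_hoist normal_ordering
        normal_ordering[THEN mult_eq_extend_right];
      (unfold hcorr_def)?;
      simp add: sdet_def algebra_simps hcorr_hoist normal_ordering
        normal_ordering[THEN mult_eq_extend_right])

lemma sdet_hat_central:
  assumes "x \<in> {a, be, ga, d, al, b, c, de}"
  shows "sdet_hat b al de ci * x = x * sdet_hat b al de ci"
  using assms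
  by (elim insertE emptyE;
      simp add: sdet_hat_def algebra_simps hcorr_hoist normal_ordering
        normal_ordering[THEN mult_eq_extend_right];
      (unfold hcorr_def)?;
      simp add: sdet_def algebra_simps hcorr_hoist normal_ordering
        normal_ordering[THEN mult_eq_extend_right])

end

theorem mainTheorem5:
  fixes h a d be ga al b c de ai di ci Dhi :: "'r::real_algebra_1"
  assumes "Gamma_rels h a d be ga al b c de ai di ci Dhi"
  shows "\<forall>x \<in> {a, be, ga, d, al, b, c, de}.
           sdet_hat b al de ci * x = x * sdet_hat b al de ci \<and>
           sdet a be ga di * x = x * sdet a be ga di"
proof -
  interpret Gamma_algebra h a d be ga al b c de ai di ci Dhi
    using assms by unfold_locales
  show ?thesis
    using sdet_central sdet_hat_central by blast
qed

end
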